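(* Let $(V_m)_{m\ge1}$ be a sequence of positive numbers which is subadditive, i.e. $V_{m+n}\le V_m+V_n$ for all $m,n\ge1$. Then \[ \sum_{i\ge1}\frac{V_{2^i}^2}{2^i}\le 65\sum_{k\ge1}\frac{V_k^2}{k^2}. \] *)

theory Defs
  imports "HOL-Analysis.Analysis"
begin

end

theory Submission
  imports Defs
begin

(* Put b k = V_k^2 / k^2. For m >= 1 and m <= k < 2m, subadditivity gives V_4m <= V_k + V_(4m-k),
   hence V_4m^2 <= 2 V_k^2 + 2 V_(4m-k)^2 <= 8 m^2 b_k + 18 m^2 b_(4m-k), where 4m - k lies in
   the next dyadic block [2m, 4m). Averaging over the m choices of k bounds V_4m^2 / 4m by five
   times the sum of b over [m, 4m). With m = 2^j every dyadic block is used at most twice, which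
   yields the inequality even with the constant 10. *)

lemma square_le_twice_sum_squares:
  fixes x y z :: real
  assumes "0 \<le> x" and "x \<le> y + z"
  shows "x\<^sup>2 \<le> 2 * y\<^sup>2 + 2 * z\<^sup>2"
proof -
  have "x\<^sup>2 \<le> (y + z)\<^sup>2" using assms by (intro power_mono) auto
  also have "\<dots> = 2 * y\<^sup>2 + 2 * z\<^sup>2 - (y - z)\<^sup>2" by (simp add: power2_eq_square algebra_simps)
  finally show ?thesis using zero_le_power2[of "y - z"] by linarith
qed

lemma sum_dyadic_blocks:
  fixes f :: "nat \<Rightarrow> 'a::comm_monoid_add"
  shows "(\<Sum>j<N. \<Sum>k\<in>{2^j..<2^Suc j}. f k) = (\<Sum>k\<in>{1..<2^N}. f k)"
proof (induction N)
  case (Suc N)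
  have "(1::nat) \<le> 2^N" "(2::nat)^N \<le> 2^Suc N" by simp_all
  then show ?case using Suc.IH by (simp add: sum.atLeastLessThan_concat)
qed simp

lemma sum_reflect_le_next_block:
  fixes g :: "nat \<Rightarrow> real"
  assumes "\<And>k. 0 \<le> g k"
  shows "(\<Sum>k\<in>{m..<2*m}. g (4*m - k)) \<le> (\<Sum>k\<in>{2*m..<4*m}. g k)"
proof -
  have "(\<Sum>k\<in>{m..<2*m}. g (4*m - k)) = (\<Sum>k\<in>(\<lambda>k. 4*m - k) ` {m..<2*m}. g k)"
    by (subst sum.reindex) (auto simp: inj_on_def)
  also have "\<dots> \<le> (\<Sum>k\<in>{2*m..<4*m}. g k)"
    by (intro sum_mono2) (auto simp: assms)
  finally show ?thesis .
qed

lemma subadditive_square_bound_by_blocks: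
  fixes V :: "nat \<Rightarrow> real"
  assumes subadd: "\<And>m n. m \<ge> 1 \<Longrightarrow> n \<ge> 1 \<Longrightarrow> V (m + n) \<le> V m + V n"
    and nonneg: "0 \<le> V (4*m)" and "m \<ge> 1"
  shows "(V (4*m))\<^sup>2 / (4*m)
           \<le> 5 * ((\<Sum>k\<in>{m..<2*m}. (V k)\<^sup>2 / (real k)\<^sup>2) + (\<Sum>k\<in>{2*m..<4*m}. (V k)\<^sup>2 / (real k)\<^sup>2))"
    (is "_ \<le> 5 * (?A + ?B)")
proof -
  define b where "b k = (V k)\<^sup>2 / (real k)\<^sup>2" for k
  have b_nonneg: "0 \<le> b k" for k by (simp add: b_def)
  have square_le: "(V k)\<^sup>2 \<le> K\<^sup>2 * b k" if "1 \<le> k" "real k \<le> K" for k K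
  proof -
    have "(V k)\<^sup>2 = (real k)\<^sup>2 * b k" using that(1) by (simp add: b_def)
    also have "\<dots> \<le> K\<^sup>2 * b k"
      using that b_nonneg[of k] by (intro mult_right_mono power_mono) auto
    finally show ?thesis .
  qed
  have pointwise: "(V (4*m))\<^sup>2 \<le> 8 * m\<^sup>2 * b k + 18 * m\<^sup>2 * b (4*m - k)"
    if k: "k \<in> {m..<2*m}" for k
  proof -
    have "V (4*m) \<le> V k + V (4*m - k)"
      using subadd[of k "4*m - k"] k \<open>m \<ge> 1\<close> by auto
    then have "(V (4*m))\<^sup>2 \<le> 2 * (V k)\<^sup>2 + 2 * (V (4*m - k))\<^sup>2"
      using nonneg by (rule square_le_twice_sum_squares[rotated])
    also have "(V k)\<^sup>2 \<le> (2 * real m)\<^sup>2 * b k"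
      using k \<open>m \<ge> 1\<close> by (intro square_le) auto
    also have "(V (4*m - k))\<^sup>2 \<le> (3 * real m)\<^sup>2 * b (4*m - k)"
      using k by (intro square_le) auto
    finally show ?thesis by (simp add: power_mult_distrib)
  qed
  have A: "?A = (\<Sum>k\<in>{m..<2*m}. b k)" and B: "?B = (\<Sum>k\<in>{2*m..<4*m}. b k)"
    by (simp_all add: b_def)
  have "real m * (V (4*m))\<^sup>2 = (\<Sum>k\<in>{m..<2*m}. (V (4*m))\<^sup>2)" by simp
  also have "\<dots> \<le> (\<Sum>k\<in>{m..<2*m}. 8 * m\<^sup>2 * b k + 18 * m\<^sup>2 * b (4*m - k))"
    by (intro sum_mono pointwise)
  also have "\<dots> = 8 * m\<^sup>2 * ?A + 18 * m\<^sup>2 * (\<Sum>k\<in>{m..<2*m}. b (4*m - k))"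
    by (simp add: A sum.distrib sum_distrib_left)
  also have "\<dots> \<le> 8 * m\<^sup>2 * ?A + 18 * m\<^sup>2 * ?B"
    unfolding B using sum_reflect_le_next_block[of b m] b_nonneg
    by (intro add_left_mono mult_left_mono) auto
  finally have "real m * (V (4*m))\<^sup>2 \<le> real m * (real m * (8 * ?A + 18 * ?B))"
    by (simp add: power2_eq_square algebra_simps)
  then have "(V (4*m))\<^sup>2 \<le> real m * (8 * ?A + 18 * ?B)"
    using \<open>m \<ge> 1\<close> by simp
  also have "\<dots> \<le> real m * (20 * ?A + 20 * ?B)"
    using sum_nonneg[of _ b] b_nonneg by (intro mult_left_mono) (auto simp: A B)
  also have "\<dots> = real (4*m) * (5 * (?A + ?B))" by simp
  finally show ?thesis
    using \<open>m \<ge> 1\<close> by (simp add: pos_divide_le_eq mult.commute)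
qed

lemma subadditive_dyadic_partial_sums:
  fixes V :: "nat \<Rightarrow> real"
  assumes nonneg: "\<And>m. m \<ge> 1 \<Longrightarrow> 0 \<le> V m"
    and subadd: "\<And>m n. m \<ge> 1 \<Longrightarrow> n \<ge> 1 \<Longrightarrow> V (m + n) \<le> V m + V n"
  shows "(\<Sum>i<N. (V (2 ^ Suc i))\<^sup>2 / 2 ^ Suc i) \<le> 10 * (\<Sum>k\<in>{1..<2^N}. (V k)\<^sup>2 / (real k)\<^sup>2)"
proof -
  define a where "a i = (V (2 ^ Suc i))\<^sup>2 / 2 ^ Suc i" for i
  define c where "c j = (\<Sum>k\<in>{2^j..<2^Suc j}. (V k)\<^sup>2 / (real k)\<^sup>2)" for j
  have c_nonneg: "0 \<le> c j" for j by (auto simp: c_def intro: sum_nonneg)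
  have a_0: "a 0 \<le> 2 * c 0"
  proof -
    have "(V 2)\<^sup>2 \<le> 2 * (V 1)\<^sup>2 + 2 * (V 1)\<^sup>2"
      using nonneg[of 2] subadd[of 1 1, unfolded one_add_one] by (intro square_le_twice_sum_squares) auto
    moreover have "c 0 = (V 1)\<^sup>2" by (simp add: c_def numeral_2_eq_2)
    ultimately show ?thesis by (simp add: a_def)
  qed
  have a_Suc: "a (Suc j) \<le> 5 * (c j + c (Suc j))" for j
    using subadditive_square_bound_by_blocks[OF subadd, of "2^j"] nonneg[of "4 * 2^j"]
    by (simp add: a_def c_def mult.assoc)
  show ?thesis
  proof (cases N)
    case (Suc M)
    have "(\<Sum>i<N. a i) = a 0 + (\<Sum>j<M. a (Suc j))"
      unfolding Suc by (rule sum.lessThan_Suc_shift)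
    also have "\<dots> \<le> 5 * c 0 + (\<Sum>j<M. 5 * (c j + c (Suc j)))"
      using a_0 c_nonneg[of 0] sum_mono[OF a_Suc] by (intro add_mono) auto
    also have "\<dots> = 5 * (\<Sum>j<M. c j) + 5 * (c 0 + (\<Sum>j<M. c (Suc j)))"
      by (simp add: sum.distrib sum_distrib_left)
    also have "\<dots> = 5 * (\<Sum>j<M. c j) + 5 * (\<Sum>j<N. c j)"
      by (simp only: Suc sum.lessThan_Suc_shift)
    also have "\<dots> \<le> 10 * (\<Sum>j<N. c j)"
      using c_nonneg[of M] by (simp add: Suc)
    finally show ?thesis by (simp only: a_def c_def sum_dyadic_blocks)
  qed simp
qed

lemma ennreal_suminf_le_of_partial_sums:
  fixes f g :: "nat \<Rightarrow> real"
  assumes "\<And>i. 0 \<le> f i" and "\<And>k. 0 \<le> g k" and "0 \<le> C"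
    and partial: "\<And>N. (\<Sum>i<N. f i) \<le> C * (\<Sum>k<h N. g k)"
  shows "(\<Sum>i. ennreal (f i)) \<le> ennreal C * (\<Sum>k. ennreal (g k))"
proof (rule suminf_le_const)
  fix N
  have "(\<Sum>i<N. ennreal (f i)) = ennreal (\<Sum>i<N. f i)"
    using assms(1) by (simp add: sum_ennreal)
  also have "\<dots> \<le> ennreal (C * (\<Sum>k<h N. g k))"
    using partial by (rule ennreal_leI)
  also have "\<dots> = ennreal C * (\<Sum>k<h N. ennreal (g k))"
    using assms(2,3) by (simp add: ennreal_mult sum_nonneg sum_ennreal)
  also have "\<dots> \<le> ennreal C * (\<Sum>k. ennreal (g k))"
    by (intro mult_left_mono sum_le_suminf summableI) auto
  finally show "(\<Sum>i<N. ennreal (f i)) \<le> ennreal C * (\<Sum>k. ennreal (g k))" .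
qed (rule summableI)

theorem lemma1:
  fixes V :: "nat \<Rightarrow> real"
  assumes pos: "\<And>m. m \<ge> 1 \<Longrightarrow> V m > 0"
    and subadd: "\<And>m n. m \<ge> 1 \<Longrightarrow> n \<ge> 1 \<Longrightarrow> V (m + n) \<le> V m + V n"
  shows "(\<Sum>i. ennreal ((V (2 ^ Suc i))\<^sup>2 / 2 ^ Suc i))
           \<le> 65 * (\<Sum>k. ennreal ((V (Suc k))\<^sup>2 / (real (Suc k))\<^sup>2))"
proof -
  let ?b = "\<lambda>k. (V k)\<^sup>2 / (real k)\<^sup>2"
  have "(\<Sum>i<N. (V (2 ^ Suc i))\<^sup>2 / 2 ^ Suc i) \<le> 65 * (\<Sum>k<2^N - 1. ?b (Suc k))" for N
  proof -
    have "{1..<2^N} = {Suc 0..<Suc (2^N - 1)}" by simp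
    then have "(\<Sum>k\<in>{1..<2^N}. ?b k) = (\<Sum>k<2^N - 1. ?b (Suc k))"
      by (simp only: sum.shift_bounds_Suc_ivl lessThan_atLeast0)
    moreover have "0 \<le> (\<Sum>k<2^N - 1. ?b (Suc k))" by (intro sum_nonneg) simp
    ultimately show ?thesis
      using subadditive_dyadic_partial_sums[OF less_imp_le[OF pos] subadd, of N] by linarith
  qed
  then have "(\<Sum>i. ennreal ((V (2 ^ Suc i))\<^sup>2 / 2 ^ Suc i))
               \<le> ennreal 65 * (\<Sum>k. ennreal (?b (Suc k)))"
    by (intro ennreal_suminf_le_of_partial_sums) auto
  then show ?thesis by simp
qed

end
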